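(* For each positive integer $n$, the number of acyclic directed graphs on the vertex set $\{1,\dots,n\}$ is equal to the number of $n\times n$ matrices with entries in $\{0,1\}$ all of whose (complex) eigenvalues are positive real numbers.
   Context: A directed graph (digraph) on vertex set $\{1,\dots,n\}$ has, for each ordered pair $(i,j)$ with $1\le i,j\le n$, at most one edge directed from $i$ to $j$; loops (edges from $i$ to $i$) and pairs of opposite edges are permitted, parallel edges are not. A digraph is acyclic if it contains no directed cycle of any length, including cycles of length $1$ (loops) and length $2$. *)

theory Defs
  imports Main "Jordan_Normal_Form.Char_Poly"
begin

end

theory Submission
  imports Defs "Jordan_Normal_Form.Schur_Decomposition" "Jordan_Normal_Form.Jordan_Normal_Form_Uniqueness"
begin

(* A digraph E on {1..n} is sent to I + N, where N is its adjacency matrix. E is acyclic iff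
   N is nilpotent (the entries of N^k count walks of length k). An acyclic digraph has no loops,
   so I + N is a 0-1 matrix, and all its eigenvalues are 1 because N is nilpotent.
   Conversely, let A be a 0-1 matrix whose eigenvalues r_1, ..., r_n are positive reals. Their
   product det A is a positive integer, hence at least 1, and their sum tr A is at most n, so by
   the AM-GM inequality all r_i equal 1. Then tr A = n forces a diagonal of ones, A - I is a 0-1
   matrix, and A - I is nilpotent because it is similar to a strictly upper triangular matrix
   (Schur), i.e. A - I is the adjacency matrix of an acyclic digraph. *)

lemma relpow_subset_Times:
  assumes "E \<subseteq> V \<times> V" and "0 < k"
  shows "E ^^ k \<subseteq> V \<times> V"
  using assms(2)
proof (induction k)
  case (Suc k)
  then show ?case
    using assms(1) by (cases k) auto
qed simp

lemma acyclic_iff_relpow_eq_empty: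
  assumes V: "finite V" and E: "E \<subseteq> V \<times> V" and n: "card V \<le> n" "0 < n"
  shows "acyclic E \<longleftrightarrow> E ^^ n = {}"
proof
  assume acyc: "acyclic E"
  show "E ^^ n = {}"
  proof (rule ccontr)
    assume "E ^^ n \<noteq> {}"
    then obtain a b where "(a, b) \<in> E ^^ n" by auto
    then obtain f where f: "\<forall>i<n. (f i, f (Suc i)) \<in> E"
      using relpow_fun_conv by metis
    have "f i \<in> V" if "i \<le> n" for i
      using f E that n(2) by (cases i) (auto dest!: spec[of _ 0] spec[of _ "i - 1"])
    then have "f ` {0..n} \<subseteq> V" by auto
    then have "\<not> inj_on f {0..n}"
      using card_inj_on_le[OF _ _ V, of f "{0..n}"] n(1) by fastforce
    then obtain i j where ij: "i < j" "j \<le> n" "f i = f j"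
      unfolding inj_on_def by (metis atLeastAtMost_iff linorder_neqE_nat)
    have "(f i, f j) \<in> E ^^ (j - i)"
      unfolding relpow_fun_conv using ij f by (intro exI[of _ "\<lambda>t. f (i + t)"]) auto
    then have "(f i, f i) \<in> E\<^sup>+"
      using ij trancl_power by (metis zero_less_diff)
    with acyc show False unfolding acyclic_def by blast
  qed
next
  assume empty: "E ^^ n = {}"
  show "acyclic E"
    unfolding acyclic_def
  proof (intro allI notI)
    fix x assume "(x, x) \<in> E\<^sup>+"
    then obtain m where m: "0 < m" "(x, x) \<in> E ^^ m" using trancl_power by blast
    have "(x, x) \<in> E ^^ (m * t)" for t
    proof (induction t)
      case (Suc t)
      then show ?case
        using m(2) by (auto simp: relpow_add simp flip: add.commute)
    qed simp
    moreover have "E ^^ (m * n) = E ^^ n O E ^^ (m * n - n)"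
      using m(1) by (simp flip: relpow_add)
    ultimately show False
      using empty by auto
  qed
qed

lemma subset_Times_atLeastAtMost_SucE:
  assumes "E \<subseteq> {1..n} \<times> {1..n}" and "(a, b) \<in> E"
  obtains i j where "a = Suc i" and "b = Suc j" and "i < n" and "j < n"
  using assms that[of "a - 1" "b - 1"] by force

(* Vertex v of the digraph corresponds to row and column v - 1 of the matrix. *)
definition adjacency_mat :: "nat \<Rightarrow> (nat \<times> nat) set \<Rightarrow> 'a :: zero_neq_one mat" where
  "adjacency_mat n E = mat n n (\<lambda>(i, j). if (Suc i, Suc j) \<in> E then 1 else 0)"

definition mat_digraph :: "'a :: zero mat \<Rightarrow> (nat \<times> nat) set" where
  "mat_digraph M = {(Suc i, Suc j) | i j. i < dim_row M \<and> j < dim_col M \<and> M $$ (i, j) \<noteq> 0}"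

lemma adjacency_mat_carrier [simp]: "adjacency_mat n E \<in> carrier_mat n n"
  and adjacency_mat_dim [simp]: "dim_row (adjacency_mat n E) = n" "dim_col (adjacency_mat n E) = n"
  by (simp_all add: adjacency_mat_def)

lemma adjacency_mat_index [simp]:
  "i < n \<Longrightarrow> j < n \<Longrightarrow> adjacency_mat n E $$ (i, j) = (if (Suc i, Suc j) \<in> E then 1 else 0)"
  by (simp add: adjacency_mat_def)

lemma mat_digraph_subset: "M \<in> carrier_mat n n \<Longrightarrow> mat_digraph M \<subseteq> {1..n} \<times> {1..n}"
  by (auto simp: mat_digraph_def)

lemma mat_digraph_adjacency_mat:
  assumes "E \<subseteq> {1..n} \<times> {1..n}"
  shows "mat_digraph (adjacency_mat n E :: 'a :: zero_neq_one mat) = E"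
proof -
  have "(a, b) \<in> mat_digraph (adjacency_mat n E :: 'a mat)" if e: "(a, b) \<in> E" for a b
  proof -
    obtain i j where "a = Suc i" "b = Suc j" "i < n" "j < n"
      by (rule subset_Times_atLeastAtMost_SucE[OF assms e])
    with e show ?thesis
      by (auto simp: mat_digraph_def)
  qed
  then show ?thesis
    by (auto simp: mat_digraph_def split: if_splits)
qed

lemma adjacency_mat_mat_digraph:
  assumes "M \<in> carrier_mat n n" and "\<And>i j. i < n \<Longrightarrow> j < n \<Longrightarrow> M $$ (i, j) \<in> {0, 1}"
  shows "adjacency_mat n (mat_digraph M) = M"
  using assms by (intro eq_matI) (auto simp: mat_digraph_def)

lemma adjacency_mat_pow_nonzero_iff:
  assumes E: "E \<subseteq> {1..n} \<times> {1..n}" and "i < n" "j < n"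
  shows "(adjacency_mat n E ^\<^sub>m k :: nat mat) $$ (i, j) \<noteq> 0 \<longleftrightarrow> (Suc i, Suc j) \<in> E ^^ k"
  using assms(2,3)
proof (induction k arbitrary: j)
  case 0
  then show ?case by simp
next
  case (Suc k)
  let ?M = "adjacency_mat n E :: nat mat"
  have "(?M ^\<^sub>m Suc k) $$ (i, j) = (\<Sum>l<n. (?M ^\<^sub>m k) $$ (i, l) * ?M $$ (l, j))"
    using Suc.prems by (simp add: scalar_prod_def atLeast0LessThan)
  also have "\<dots> \<noteq> 0 \<longleftrightarrow> (\<exists>l<n. (Suc i, Suc l) \<in> E ^^ k \<and> (Suc l, Suc j) \<in> E)"
    using Suc by auto
  also have "\<dots> \<longleftrightarrow> (Suc i, Suc j) \<in> E ^^ Suc k"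
  proof
    assume "(Suc i, Suc j) \<in> E ^^ Suc k"
    then obtain y where y: "(Suc i, y) \<in> E ^^ k" "(y, Suc j) \<in> E" by auto
    obtain l j' where "y = Suc l" "Suc j = Suc j'" "l < n" "j' < n"
      by (rule subset_Times_atLeastAtMost_SucE[OF E y(2)])
    with y show "\<exists>l<n. (Suc i, Suc l) \<in> E ^^ k \<and> (Suc l, Suc j) \<in> E" by auto
  qed auto
  finally show ?case .
qed

lemma adjacency_mat_nilpotent_iff_acyclic:
  assumes E: "E \<subseteq> {1..n} \<times> {1..n}" and n: "0 < n"
  shows "(adjacency_mat n E :: 'a :: semiring_char_0 mat) ^\<^sub>m n = 0\<^sub>m n n \<longleftrightarrow> acyclic E"
proof -
  interpret of_nat_hom: inj_semiring_hom "of_nat :: nat \<Rightarrow> 'a"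
    by unfold_locales auto
  let ?N = "adjacency_mat n E :: nat mat"
  have "adjacency_mat n E = of_nat_hom.mat_hom ?N"
    by (intro eq_matI) auto
  then have "adjacency_mat n E ^\<^sub>m n = of_nat_hom.mat_hom (?N ^\<^sub>m n)"
    by (simp add: of_nat_hom.mat_hom_pow[OF adjacency_mat_carrier])
  moreover have "of_nat_hom.mat_hom (0\<^sub>m n n) = 0\<^sub>m n n"
    by (intro eq_matI) auto
  ultimately have "(adjacency_mat n E :: 'a mat) ^\<^sub>m n = 0\<^sub>m n n
      \<longleftrightarrow> of_nat_hom.mat_hom (?N ^\<^sub>m n) = of_nat_hom.mat_hom (0\<^sub>m n n)"
    by simp
  also have "\<dots> \<longleftrightarrow> ?N ^\<^sub>m n = 0\<^sub>m n n"
    using of_nat_hom.mat_hom_inj[of "?N ^\<^sub>m n" "0\<^sub>m n n"] by auto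
  also have "\<dots> \<longleftrightarrow> E ^^ n = {}"
  proof
    assume "?N ^\<^sub>m n = 0\<^sub>m n n"
    show "E ^^ n = {}"
    proof (intro equals0I)
      fix e assume e: "e \<in> E ^^ n"
      obtain a b where ab: "e = (a, b)" by (cases e)
      obtain i j where "a = Suc i" "b = Suc j" "i < n" "j < n"
        by (rule subset_Times_atLeastAtMost_SucE[OF relpow_subset_Times[OF E n] e[unfolded ab]])
      with e ab \<open>?N ^\<^sub>m n = 0\<^sub>m n n\<close> show False
        using adjacency_mat_pow_nonzero_iff[OF E, of i j n] by simp
    qed
  next
    assume "E ^^ n = {}"
    then show "?N ^\<^sub>m n = 0\<^sub>m n n"
      using adjacency_mat_pow_nonzero_iff[OF E] by (intro eq_matI) auto
  qed
  also have "\<dots> \<longleftrightarrow> acyclic E"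
    using acyclic_iff_relpow_eq_empty[OF _ E, where n = n] n by simp
  finally show ?thesis .
qed

definition mat_trace :: "'a :: comm_ring_1 mat \<Rightarrow> 'a" where
  "mat_trace A = (\<Sum>i<dim_row A. A $$ (i, i))"

lemma mat_trace_mult_comm:
  assumes "A \<in> carrier_mat n m" and "B \<in> carrier_mat m n"
  shows "mat_trace (A * B) = mat_trace (B * A)"
proof -
  have "mat_trace (A * B) = (\<Sum>i<n. \<Sum>k<m. A $$ (i, k) * B $$ (k, i))"
    using assms by (simp add: mat_trace_def scalar_prod_def atLeast0LessThan)
  also have "\<dots> = (\<Sum>k<m. \<Sum>i<n. B $$ (k, i) * A $$ (i, k))"
    by (subst sum.swap) (simp add: mult.commute)
  also have "\<dots> = mat_trace (B * A)"
    using assms by (simp add: mat_trace_def scalar_prod_def atLeast0LessThan)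
  finally show ?thesis .
qed

lemma mat_trace_similar:
  assumes "similar_mat_wit A B P Q"
  shows "mat_trace A = mat_trace B"
proof -
  obtain n where A: "A \<in> carrier_mat n n" using assms unfolding similar_mat_wit_def Let_def by blast
  note wit = similar_mat_witD2[OF A assms]
  have "mat_trace A = mat_trace (P * (B * Q))"
    using wit by (simp add: assoc_mult_mat[of P n n B n Q n])
  also have "\<dots> = mat_trace ((B * Q) * P)"
    using wit by (intro mat_trace_mult_comm) auto
  also have "(B * Q) * P = B"
    using wit by (simp add: assoc_mult_mat[of B n n Q n P n])
  finally show ?thesis .
qed

lemma mat_trace_diag_mat: "mat_trace A = sum_list (diag_mat A)"
  by (simp add: mat_trace_def diag_mat_def sum_list_sum_nth atLeast0LessThan)

lemma det_Ints:
  fixes A :: "'a :: comm_ring_1 mat"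
  assumes "A \<in> carrier_mat n n" and "\<And>i j. i < n \<Longrightarrow> j < n \<Longrightarrow> A $$ (i, j) \<in> \<int>"
  shows "det A \<in> \<int>"
  using assms unfolding det_def
  by (fastforce intro!: Ints_mult simp: permutes_in_image)

lemma mat_trace_det_linear_factors:
  fixes A :: "'a :: conjugatable_ordered_field mat"
  assumes A: "A \<in> carrier_mat n n" and cp: "char_poly A = (\<Prod>a\<leftarrow>es. [:-a, 1:])"
  shows "mat_trace A = sum_list es" and "det A = prod_list es"
proof -
  obtain B P Q where "schur_decomposition A es = (B, P, Q)" by (cases "schur_decomposition A es")
  from schur_decomposition[OF A cp this]
  have sim: "similar_mat_wit A B P Q" and ut: "upper_triangular B" and es: "diag_mat B = es" by auto
  have B: "B \<in> carrier_mat n n" using similar_mat_witD2[OF A sim] by auto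
  show "mat_trace A = sum_list es"
    using mat_trace_similar[OF sim] es by (simp add: mat_trace_diag_mat)
  have "similar_mat A B" using sim unfolding similar_mat_def by blast
  then show "det A = prod_list es"
    using det_similar det_upper_triangular[OF ut B] es by metis
qed

lemma strictly_upper_triangular_pow:
  fixes C :: "'a :: semiring_1 mat"
  assumes C: "C \<in> carrier_mat n n"
    and lower: "\<And>i j. i < n \<Longrightarrow> j < n \<Longrightarrow> j \<le> i \<Longrightarrow> C $$ (i, j) = 0"
  shows "i < n \<Longrightarrow> j < n \<Longrightarrow> j < i + k \<Longrightarrow> (C ^\<^sub>m k) $$ (i, j) = 0"
proof (induction k arbitrary: j)
  case 0
  then show ?case using C by simp
next
  case (Suc k)
  have "(C ^\<^sub>m Suc k) $$ (i, j) = (\<Sum>l<n. (C ^\<^sub>m k) $$ (i, l) * C $$ (l, j))"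
    using Suc.prems C by (simp add: scalar_prod_def atLeast0LessThan)
  also have "\<dots> = 0"
  proof (intro sum.neutral ballI)
    fix l assume "l \<in> {..<n}"
    then show "(C ^\<^sub>m k) $$ (i, l) * C $$ (l, j) = 0"
      using Suc lower[of l j] by (cases "l < i + k") auto
  qed
  finally show ?case .
qed

lemma strictly_upper_triangular_nilpotent:
  fixes C :: "'a :: semiring_1 mat"
  assumes C: "C \<in> carrier_mat n n"
    and lower: "\<And>i j. i < n \<Longrightarrow> j < n \<Longrightarrow> j \<le> i \<Longrightarrow> C $$ (i, j) = 0"
  shows "C ^\<^sub>m n = 0\<^sub>m n n"
  using strictly_upper_triangular_pow[OF assms] C by (intro eq_matI) auto

lemma char_matrix_nilpotent_if_char_poly_eq_power:
  fixes A :: "'a :: conjugatable_ordered_field mat" and a :: 'a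
  assumes A: "A \<in> carrier_mat n n" and cp: "char_poly A = [:-a, 1:] ^ n"
  shows "char_matrix A a ^\<^sub>m n = 0\<^sub>m n n"
proof -
  have cp': "char_poly A = (\<Prod>e\<leftarrow>replicate n a. [:-e, 1:])"
    using cp by simp
  obtain B P Q where "schur_decomposition A (replicate n a) = (B, P, Q)"
    by (cases "schur_decomposition A (replicate n a)")
  from schur_decomposition[OF A cp' this]
  have sim: "similar_mat_wit A B P Q" and ut: "upper_triangular B"
    and diag: "diag_mat B = replicate n a" by auto
  note wit = similar_mat_witD2[OF A sim]
  have diag_a: "B $$ (i, i) = a" if "i < n" for i
    using arg_cong[OF diag, of "\<lambda>xs. xs ! i"] that wit by (simp add: diag_mat_def)
  have "char_matrix B a ^\<^sub>m n = 0\<^sub>m n n"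
    using wit ut diag_a
    by (intro strictly_upper_triangular_nilpotent) (auto simp: char_matrix_def upper_triangular_def)
  then show ?thesis
    using similar_mat_wit_pow_id[OF similar_mat_wit_char_matrix[OF sim], where k = n] wit by simp
qed

lemma eigenvalue_char_matrix_iff:
  fixes A :: "'a :: field mat"
  assumes A: "A \<in> carrier_mat n n"
  shows "eigenvalue (char_matrix A c) z \<longleftrightarrow> eigenvalue A (z + c)"
proof -
  have "char_matrix (char_matrix A c) z = char_matrix A (z + c)"
    using A by (intro eq_matI) (auto simp: char_matrix_def)
  then show ?thesis
    using A by (simp add: eigenvalue_char_matrix[OF A] eigenvalue_char_matrix[OF char_matrix_closed[OF A]])
qed

lemma eigenvalue_nilpotent:
  fixes N :: "'a :: idom mat"
  assumes N: "N \<in> carrier_mat n n" and nil: "N ^\<^sub>m k = 0\<^sub>m n n" and ev: "eigenvalue N z"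
  shows "z = 0"
proof -
  obtain v where v: "eigenvector N v z" using ev unfolding eigenvalue_def by blast
  then have vn: "v \<in> carrier_vec n" "v \<noteq> 0\<^sub>v n" using N unfolding eigenvector_def by auto
  then obtain i where i: "i < n" "v $ i \<noteq> 0" by (metis carrier_vecD eq_vecI index_zero_vec)
  have "(N ^\<^sub>m k *\<^sub>v v) $ i = 0"
    using nil i vn by simp
  then have "z ^ k * v $ i = 0"
    using eigenvector_pow[OF N v, of k] i vn by simp
  then show "z = 0" using i by simp
qed

lemma char_matrix_one_add:
  fixes M :: "'a :: field mat"
  assumes "M \<in> carrier_mat n n"
  shows "char_matrix (1\<^sub>m n + M) 1 = M"
  using assms by (intro eq_matI) (auto simp: char_matrix_def)

lemma eigenvalue_one_add_nilpotent:
  fixes N :: "'a :: field mat"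
  assumes N: "N \<in> carrier_mat n n" and nil: "N ^\<^sub>m k = 0\<^sub>m n n"
    and ev: "eigenvalue (1\<^sub>m n + N) z"
  shows "z = 1"
proof -
  have "eigenvalue (char_matrix (1\<^sub>m n + N) 1) (z - 1)"
    using ev N by (subst eigenvalue_char_matrix_iff[of _ n]) auto
  then have "eigenvalue N (z - 1)"
    using char_matrix_one_add[OF N] by simp
  then have "z - 1 = 0"
    by (rule eigenvalue_nilpotent[OF N nil])
  then show "z = 1"
    by simp
qed

lemma all_eq_one_if_sum_le_length_prod_ge_one:
  fixes xs :: "real list"
  assumes pos: "\<forall>x\<in>set xs. x > 0"
    and sum: "sum_list xs \<le> length xs" and prod: "prod_list xs \<ge> 1"
  shows "\<forall>x\<in>set xs. x = 1"
proof -
  have ln_prod: "ln (prod_list xs) = sum_list (map ln xs)"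
    using pos
  proof (induction xs)
    case (Cons x xs)
    moreover have "prod_list xs > 0"
      using Cons.prems by (induction xs) auto
    ultimately show ?case
      using ln_mult[of x "prod_list xs"] by auto
  qed simp
  \<comment> \<open>x - 1 - ln x is nonnegative and vanishes only at x = 1\<close>
  define d where "d x = x - 1 - ln x" for x :: real
  have d_nonneg: "\<forall>x\<in>set xs. d x \<ge> 0"
    using pos ln_le_minus_one unfolding d_def by fastforce
  have "sum_list (map d xs) = sum_list xs - length xs - ln (prod_list xs)"
    unfolding ln_prod d_def by (induction xs) auto
  also have "\<dots> \<le> 0"
    using sum ln_ge_zero[OF prod] by linarith
  finally have "sum_list (map d xs) = 0"
    using d_nonneg sum_list_nonneg[of "map d xs"] by fastforce
  then have d_zero: "\<forall>x\<in>set xs. d x = 0"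
    using d_nonneg sum_list_nonneg_eq_0_iff[of "map d xs"] by auto
  show ?thesis
  proof
    fix x assume "x \<in> set xs"
    then have "x > 0" and "ln x = x - 1"
      using pos d_zero unfolding d_def by auto
    then show "x = 1" by (rule ln_eq_minus_one)
  qed
qed

lemma char_poly_eq_power_if_positive_eigenvalues:
  fixes A :: "complex mat"
  assumes A: "A \<in> carrier_mat n n"
    and det: "det A \<in> \<int>" and trace: "Re (mat_trace A) \<le> n"
    and ev: "\<And>z. eigenvalue A z \<Longrightarrow> z \<in> \<real> \<and> Re z > 0"
  shows "char_poly A = [:-1, 1:] ^ n"
proof -
  obtain es where cp: "char_poly A = (\<Prod>a\<leftarrow>es. [:-a, 1:])" and len: "length es = n"
    using char_poly_factorized[OF A] by blast
  have "eigenvalue A e" if "e \<in> set es" for e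
    using that eigenvalue_root_char_poly[OF A] unfolding cp by (simp add: poly_prod_list prod_list_zero_iff)
  then have real: "\<forall>e\<in>set es. e = of_real (Re e)" and pos: "\<forall>r\<in>set (map Re es). r > 0"
    using ev by (auto simp: Reals_def)
  define rs where "rs = map Re es"
  have es: "es = map of_real rs"
    using real unfolding rs_def by (simp add: map_idI)
  have prod_det: "of_real (prod_list rs) = det A" and sum_trace: "of_real (sum_list rs) = mat_trace A"
    using mat_trace_det_linear_factors[OF A cp] unfolding es by simp_all
  have rs_pos: "\<forall>r\<in>set rs. r > 0"
    using pos by (simp add: rs_def)
  then have "prod_list rs > 0"
    by (induction rs) auto
  moreover obtain k where "det A = of_int k"
    using det by (elim Ints_cases)
  then have "prod_list rs = of_int k"
    using prod_det by (metis of_real_eq_iff of_real_of_int_eq)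
  ultimately have "prod_list rs \<ge> 1"
    by simp
  moreover have "sum_list rs \<le> length rs"
    using trace sum_trace len unfolding es by (metis Re_complex_of_real length_map)
  ultimately have "\<forall>r\<in>set rs. r = 1"
    using all_eq_one_if_sum_le_length_prod_ge_one rs_pos by blast
  then have "es = replicate n 1"
    using es len by (intro replicate_eqI) auto
  then show ?thesis
    using cp by simp
qed

lemma unipotent_if_zero_one_positive_eigenvalues:
  fixes A :: "complex mat"
  assumes A: "A \<in> carrier_mat n n"
    and zero_one: "\<forall>i<n. \<forall>j<n. A $$ (i, j) \<in> {0, 1}"
    and ev: "\<forall>z. eigenvalue A z \<longrightarrow> z \<in> \<real> \<and> Re z > 0"
  shows "\<forall>i<n. A $$ (i, i) = 1" and "char_matrix A 1 ^\<^sub>m n = 0\<^sub>m n n"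
proof -
  have diag_le: "Re (A $$ (i, i)) \<le> 1" if "i < n" for i
    using zero_one that by fastforce
  have det: "det A \<in> \<int>"
    using zero_one by (intro det_Ints[OF A]) force
  have re_trace: "Re (mat_trace A) = (\<Sum>i<n. Re (A $$ (i, i)))"
    using A by (simp add: mat_trace_def)
  also have "\<dots> \<le> n"
    using sum_mono[of "{..<n}", OF diag_le] by simp
  finally have cp: "char_poly A = [:-1, 1:] ^ n"
    using char_poly_eq_power_if_positive_eigenvalues[OF A det] ev by blast
  then show "char_matrix A 1 ^\<^sub>m n = 0\<^sub>m n n"
    by (rule char_matrix_nilpotent_if_char_poly_eq_power[OF A])
  have "mat_trace A = of_nat n"
    using mat_trace_det_linear_factors(1)[OF A, of "replicate n 1"] cp by (simp add: sum_list_replicate)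
  then have "(\<Sum>i<n. 1 - Re (A $$ (i, i))) = 0"
    using re_trace by (simp add: sum_subtractf)
  then have "\<forall>i<n. Re (A $$ (i, i)) = 1"
    using diag_le by (subst (asm) sum_nonneg_eq_0_iff) auto
  then show "\<forall>i<n. A $$ (i, i) = 1"
    using zero_one by fastforce
qed

lemma zero_one_positive_eigenvalues_if_acyclic:
  assumes E: "E \<subseteq> {1..n} \<times> {1..n}" and acyc: "acyclic E" and n: "0 < n"
  shows "\<forall>i<n. \<forall>j<n. (1\<^sub>m n + adjacency_mat n E :: complex mat) $$ (i, j) \<in> {0, 1}"
    and "\<forall>z. eigenvalue (1\<^sub>m n + adjacency_mat n E :: complex mat) z \<longrightarrow> z \<in> \<real> \<and> Re z > 0"
proof -
  have "(x, x) \<notin> E" for x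
    using acyc unfolding acyclic_def by blast
  then show "\<forall>i<n. \<forall>j<n. (1\<^sub>m n + adjacency_mat n E :: complex mat) $$ (i, j) \<in> {0, 1}"
    by auto
  have "adjacency_mat n E ^\<^sub>m n = (0\<^sub>m n n :: complex mat)"
    using adjacency_mat_nilpotent_iff_acyclic[OF E n] acyc by blast
  then show "\<forall>z. eigenvalue (1\<^sub>m n + adjacency_mat n E :: complex mat) z \<longrightarrow> z \<in> \<real> \<and> Re z > 0"
    using eigenvalue_one_add_nilpotent[OF adjacency_mat_carrier] by fastforce
qed

lemma acyclic_if_zero_one_positive_eigenvalues:
  fixes A :: "complex mat"
  assumes A: "A \<in> carrier_mat n n" and n: "0 < n"
    and zero_one: "\<forall>i<n. \<forall>j<n. A $$ (i, j) \<in> {0, 1}"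
    and ev: "\<forall>z. eigenvalue A z \<longrightarrow> z \<in> \<real> \<and> Re z > 0"
  defines "E \<equiv> mat_digraph (char_matrix A 1)" \<comment> \<open>char_matrix A 1 is A - 1\<close>
  shows "E \<subseteq> {1..n} \<times> {1..n}" and "acyclic E" and "1\<^sub>m n + adjacency_mat n E = A"
proof -
  note unipotent = unipotent_if_zero_one_positive_eigenvalues[OF A zero_one ev]
  have "char_matrix A 1 $$ (i, j) \<in> {0, 1}" if "i < n" "j < n" for i j
    using A zero_one unipotent(1) that by (cases "i = j") (auto simp: char_matrix_def)
  then have adj: "adjacency_mat n E = char_matrix A 1"
    unfolding E_def using A by (intro adjacency_mat_mat_digraph) auto
  show "E \<subseteq> {1..n} \<times> {1..n}"
    unfolding E_def using A by (intro mat_digraph_subset) simp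
  then show "acyclic E"
    using adjacency_mat_nilpotent_iff_acyclic[OF _ n] adj unipotent(2) by metis
  show "1\<^sub>m n + adjacency_mat n E = A"
    using A unfolding adj by (intro eq_matI) (auto simp: char_matrix_def)
qed

theorem theorem1:
  fixes n :: nat
  assumes "n \<ge> 1"
  shows "card {E :: (nat \<times> nat) set. E \<subseteq> {1..n} \<times> {1..n} \<and> acyclic E}
       = card {A :: complex mat. A \<in> carrier_mat n n
                 \<and> (\<forall>i<n. \<forall>j<n. A $$ (i, j) \<in> {0, 1})
                 \<and> (\<forall>z. eigenvalue A z \<longrightarrow> z \<in> \<real> \<and> Re z > 0)}"
proof -
  let ?S = "{E :: (nat \<times> nat) set. E \<subseteq> {1..n} \<times> {1..n} \<and> acyclic E}"
  let ?T = "{A :: complex mat. A \<in> carrier_mat n n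
                 \<and> (\<forall>i<n. \<forall>j<n. A $$ (i, j) \<in> {0, 1})
                 \<and> (\<forall>z. eigenvalue A z \<longrightarrow> z \<in> \<real> \<and> Re z > 0)}"
  have n: "0 < n" using assms by simp
  have "bij_betw (\<lambda>E. 1\<^sub>m n + adjacency_mat n E) ?S ?T"
  proof (rule bij_betw_byWitness[where f' = "\<lambda>A. mat_digraph (char_matrix A 1)"])
    show "\<forall>E\<in>?S. mat_digraph (char_matrix (1\<^sub>m n + adjacency_mat n E) 1) = E"
      by (simp add: char_matrix_one_add mat_digraph_adjacency_mat)
    show "\<forall>A\<in>?T. 1\<^sub>m n + adjacency_mat n (mat_digraph (char_matrix A 1)) = A"
      using acyclic_if_zero_one_positive_eigenvalues(3)[OF _ n] by blast
    show "(\<lambda>E. 1\<^sub>m n + adjacency_mat n E) ` ?S \<subseteq> ?T"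
    proof (intro image_subsetI)
      fix E assume "E \<in> ?S"
      then show "1\<^sub>m n + adjacency_mat n E \<in> ?T"
        using zero_one_positive_eigenvalues_if_acyclic[OF _ _ n, of E] by simp
    qed
    show "(\<lambda>A. mat_digraph (char_matrix A 1)) ` ?T \<subseteq> ?S"
      using acyclic_if_zero_one_positive_eigenvalues(1,2)[OF _ n] by auto
  qed
  then show ?thesis
    by (rule bij_betw_same_card)
qed

end
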